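(* Let $K\ge 2$ and let $M,N,d$ be positive integers with $d\le\min(M,N)$. The symmetric system $(M\times N,d)^K$ is proper if and only if $N_v\ge N_e$, where $N_v=Kd(M+N-2d)$ and $N_e=K(K-1)d^2$; equivalently, it is proper if and only if \[ M+N-(K+1)d\ge 0 . \]
   Context: $(M\times N,d)^K$ denotes the $K$-user system $\prod_{k=1}^K(M^{[k]}\times N^{[k]},d^{[k]})$ with $M^{[k]}=M$, $N^{[k]}=N$, $d^{[k]}=d$ for all $k$. For a general $K$-user system $\prod_{k=1}^K(M^{[k]}\times N^{[k]},d^{[k]})$ (transmitter $k$ has $M^{[k]}$ antennas, receiver $k$ has $N^{[k]}$, user $k$ demands $d^{[k]}$ degrees of freedom), associate abstract variables: for each transmitter $j$ and $n\in\{1,\dots,d^{[j]}\}$, the $M^{[j]}-d^{[j]}$ variables $x^{[j]}_{n,1},\dots,x^{[j]}_{n,M^{[j]}-d^{[j]}}$; for each receiver $k$ and $m\in\{1,\dots,d^{[k]}\}$, the $N^{[k]}-d^{[k]}$ variables $y^{[k]}_{m,1},\dots,y^{[k]}_{m,N^{[k]}-d^{[k]}}$. The equations are the symbols $E^{mn}_{kj}$ for $j\ne k$, $m\le d^{[k]}$, $n\le d^{[j]}$ (standing for $\mathbf u^{[k]\dagger}_m\mathbf H^{[kj]}\mathbf v^{[j]}_n=0$); $\mathcal E$ is the set of all of them, and $\mathrm{var}(E^{mn}_{kj})=\{x^{[j]}_{n,i}\}_{i}\cup\{y^{[k]}_{m,i}\}_{i}$. The system is proper if for every $S\subseteq\mathcal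 E$, $|S|\le\left|\bigcup_{E\in S}\mathrm{var}(E)\right|$, and improper otherwise. $N_v$ is the total number of variables, $\sum_k d^{[k]}(M^{[k]}+N^{[k]}-2d^{[k]})$, and $N_e=|\mathcal E|=\sum_{k\ne j}d^{[k]}d^{[j]}$. *)

theory Defs
  imports Main
begin

(* A K-user MIMO interference system: users are indexed 0..K-1;
   Mt k = M^[k] (transmit antennas), Nr k = N^[k] (receive antennas),
   dd k = d^[k] (degrees of freedom). Stream indices are 0-based. *)

datatype var =
    XVar nat nat nat   (* XVar j n i  =  x^[j]_{n,i} *)
  | YVar nat nat nat   (* YVar k m i  =  y^[k]_{m,i} *)

(* equation E^{mn}_{kj} is represented by the tuple (k, j, m, n) *)
definition equations :: "nat \<Rightarrow> (nat \<Rightarrow> nat) \<Rightarrow> (nat \<times> nat \<times> nat \<times> nat) set" where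
  "equations K dd = {(k, j, m, n). k < K \<and> j < K \<and> j \<noteq> k \<and> m < dd k \<and> n < dd j}"

definition eq_vars ::
  "(nat \<Rightarrow> nat) \<Rightarrow> (nat \<Rightarrow> nat) \<Rightarrow> (nat \<Rightarrow> nat) \<Rightarrow> nat \<times> nat \<times> nat \<times> nat \<Rightarrow> var set" where
  "eq_vars Mt Nr dd E = (case E of (k, j, m, n) \<Rightarrow>
      {XVar j n i | i. i < Mt j - dd j} \<union> {YVar k m i | i. i < Nr k - dd k})"

definition proper_system ::
  "nat \<Rightarrow> (nat \<Rightarrow> nat) \<Rightarrow> (nat \<Rightarrow> nat) \<Rightarrow> (nat \<Rightarrow> nat) \<Rightarrow> bool" where
  "proper_system K Mt Nr dd \<longleftrightarrow>
     (\<forall>S \<subseteq> equations K dd. card S \<le> card (\<Union>E\<in>S. eq_vars Mt Nr dd E))"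

definition num_vars :: "nat \<Rightarrow> (nat \<Rightarrow> nat) \<Rightarrow> (nat \<Rightarrow> nat) \<Rightarrow> (nat \<Rightarrow> nat) \<Rightarrow> nat" where
  "num_vars K Mt Nr dd = (\<Sum>k<K. dd k * (Mt k + Nr k - 2 * dd k))"

definition num_eqs :: "nat \<Rightarrow> (nat \<Rightarrow> nat) \<Rightarrow> nat" where
  "num_eqs K dd = card (equations K dd)"

end

theory Submission
  imports Defs
begin

(* Every equation E^{mn}_{kj} involves exactly the M-d variables of the
   transmit stream (j,n) and the N-d variables of the receive stream (k,m).
   Hence a set S of equations involves |T(S)|(M-d) + |R(S)|(N-d) variables,
   where T(S), R(S) are the transmit/receive streams occurring in S.  Each
   stream occurs in at most (K-1)d equations, so |S| <= (K-1)d |T(S)| and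
   |S| <= (K-1)d |R(S)|.  If (K-1)d <= (M-d) + (N-d), splitting the budget
   (K-1)d into shares below M-d and N-d yields |S| <= #variables of S, so the
   system is proper.  Conversely, for S = all equations every stream occurs,
   and the counting inequality Kd(K-1)d <= Kd((M-d)+(N-d)) forces the same
   condition. *)

lemma card_le_fibre_bound:
  fixes f :: "'a \<Rightarrow> 'b"
  assumes "finite S" and fibre: "\<And>y. y \<in> f ` S \<Longrightarrow> card {x \<in> S. f x = y} \<le> c"
  shows "card S \<le> c * card (f ` S)"
proof -
  have "S = (\<Union>y\<in>f ` S. {x \<in> S. f x = y})" by blast
  then have "card S \<le> (\<Sum>y\<in>f ` S. card {x \<in> S. f x = y})"
    using card_UN_le[of "f ` S" "\<lambda>y. {x \<in> S. f x = y}"] assms(1) by simp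
  also have "\<dots> \<le> (\<Sum>y\<in>f ` S. c)" using fibre by (rule sum_mono)
  finally show ?thesis by (simp add: mult.commute)
qed

(* If s is at most c*x and at most c*y, and the budget c can be split into
   shares not exceeding p and q, then s is at most p*x + q*y: write c = a + b
   with a <= p, b <= q and average the two bounds with weights a and b. *)
lemma split_bound:
  fixes s x y c p q :: nat
  assumes "c \<le> p + q" and "s \<le> c * x" and "s \<le> c * y"
  shows "s \<le> p * x + q * y"
proof -
  define a where "a = min c p"
  define b where "b = c - a"
  have ab: "c = a + b" "a \<le> p" "b \<le> q"
    using assms(1) by (auto simp: a_def b_def)
  have "s \<le> a * x + b * y"
  proof (cases "c = 0")
    case True
    then show ?thesis using assms(2) by simp
  next
    case False
    have "c * s = a * s + b * s" by (simp add: ab(1) add_mult_distrib)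
    also have "\<dots> \<le> a * (c * x) + b * (c * y)"
      using assms(2,3) by (intro add_mono mult_le_mono2)
    also have "\<dots> = c * (a * x + b * y)" by (simp add: algebra_simps)
    finally show ?thesis using False by simp
  qed
  also have "\<dots> \<le> p * x + q * y" using ab by (intro add_mono mult_le_mono1)
  finally show ?thesis .
qed

definition tx_stream :: "nat \<times> nat \<times> nat \<times> nat \<Rightarrow> nat \<times> nat" where
  "tx_stream E = (case E of (k, j, m, n) \<Rightarrow> (j, n))"
definition rx_stream :: "nat \<times> nat \<times> nat \<times> nat \<Rightarrow> nat \<times> nat" where
  "rx_stream E = (case E of (k, j, m, n) \<Rightarrow> (k, m))"

(* A transmit stream (j,n) is hit by one equation per other receiver k and
   receive stream m, i.e. by at most (K-1)d equations; dually for receivers. *)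
lemma tx_fibre_card:
  assumes "j < K"
  shows "card {E \<in> equations K (\<lambda>_. d). tx_stream E = (j, n)} \<le> (K - 1) * d"
proof -
  have "{E \<in> equations K (\<lambda>_. d). tx_stream E = (j, n)}
        \<subseteq> (\<lambda>(k, m). (k, j, m, n)) ` (({..<K} - {j}) \<times> {..<d})"
    by (auto simp: equations_def tx_stream_def)
  then have "card {E \<in> equations K (\<lambda>_. d). tx_stream E = (j, n)} \<le> card (({..<K} - {j}) \<times> {..<d})"
    by (meson card_image_le card_mono finite_Diff finite_SigmaI finite_imageI finite_lessThan order_trans)
  then show ?thesis using assms by (simp add: card_cartesian_product)
qed

lemma rx_fibre_card:
  assumes "k < K"
  shows "card {E \<in> equations K (\<lambda>_. d). rx_stream E = (k, m)} \<le> (K - 1) * d"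
proof -
  have "{E \<in> equations K (\<lambda>_. d). rx_stream E = (k, m)}
        \<subseteq> (\<lambda>(j, n). (k, j, m, n)) ` (({..<K} - {k}) \<times> {..<d})"
    by (auto simp: equations_def rx_stream_def)
  then have "card {E \<in> equations K (\<lambda>_. d). rx_stream E = (k, m)} \<le> card (({..<K} - {k}) \<times> {..<d})"
    by (meson card_image_le card_mono finite_Diff finite_SigmaI finite_imageI finite_lessThan order_trans)
  then show ?thesis using assms by (simp add: card_cartesian_product)
qed

lemma equations_symmetric:
  "equations K (\<lambda>_. d) = (SIGMA k:{..<K}. ({..<K} - {k}) \<times> {..<d} \<times> {..<d})"
  by (auto simp: equations_def)

lemma finite_equations: "finite (equations K (\<lambda>_. d))"
  unfolding equations_symmetric by auto

lemma card_equations: "card (equations K (\<lambda>_. d)) = K * (K - 1) * d ^ 2"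
proof -
  have "card (equations K (\<lambda>_. d)) = (\<Sum>k<K. card (({..<K} - {k}) \<times> {..<d} \<times> {..<d}))"
    unfolding equations_symmetric by (rule card_SigmaI) auto
  also have "\<dots> = (\<Sum>k<K. (K - 1) * (d * d))"
    by (rule sum.cong) (auto simp: card_cartesian_product)
  finally show ?thesis by (simp add: power2_eq_square)
qed

lemma vars_of_equations:
  "(\<Union>E\<in>S. eq_vars (\<lambda>_. M) (\<lambda>_. N) (\<lambda>_. d) E) =
     (\<lambda>((j, n), i). XVar j n i) ` (tx_stream ` S \<times> {..<M - d})
   \<union> (\<lambda>((k, m), i). YVar k m i) ` (rx_stream ` S \<times> {..<N - d})"
  by (fastforce simp: eq_vars_def tx_stream_def rx_stream_def split: prod.splits)

lemma card_vars_of_equations: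
  assumes "finite S"
  shows "card (\<Union>E\<in>S. eq_vars (\<lambda>_. M) (\<lambda>_. N) (\<lambda>_. d) E)
         = card (tx_stream ` S) * (M - d) + card (rx_stream ` S) * (N - d)"
proof -
  have "inj (\<lambda>((j, n), i). XVar j n i)" "inj (\<lambda>((k, m), i). YVar k m i)"
    by (auto simp: inj_def)
  then show ?thesis
    unfolding vars_of_equations using assms
    by (subst card_Un_disjoint) (auto simp: card_image inj_on_subset card_cartesian_product)
qed

lemma card_le_tx_streams:
  assumes "S \<subseteq> equations K (\<lambda>_. d)"
  shows "card S \<le> (K - 1) * d * card (tx_stream ` S)"
proof (rule card_le_fibre_bound)
  show "finite S" using assms finite_equations by (rule finite_subset)
next
  fix y assume "y \<in> tx_stream ` S"
  then obtain j n where y: "y = (j, n)" and "j < K"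
    using assms by (auto simp: tx_stream_def equations_def)
  have "card {E \<in> S. tx_stream E = y} \<le> card {E \<in> equations K (\<lambda>_. d). tx_stream E = (j, n)}"
    using assms y by (intro card_mono) (auto intro: finite_subset[OF _ finite_equations])
  also have "\<dots> \<le> (K - 1) * d" using \<open>j < K\<close> by (rule tx_fibre_card)
  finally show "card {E \<in> S. tx_stream E = y} \<le> (K - 1) * d" .
qed

lemma card_le_rx_streams:
  assumes "S \<subseteq> equations K (\<lambda>_. d)"
  shows "card S \<le> (K - 1) * d * card (rx_stream ` S)"
proof (rule card_le_fibre_bound)
  show "finite S" using assms finite_equations by (rule finite_subset)
next
  fix y assume "y \<in> rx_stream ` S"
  then obtain k m where y: "y = (k, m)" and "k < K"
    using assms by (auto simp: rx_stream_def equations_def)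
  have "card {E \<in> S. rx_stream E = y} \<le> card {E \<in> equations K (\<lambda>_. d). rx_stream E = (k, m)}"
    using assms y by (intro card_mono) (auto intro: finite_subset[OF _ finite_equations])
  also have "\<dots> \<le> (K - 1) * d" using \<open>k < K\<close> by (rule rx_fibre_card)
  finally show "card {E \<in> S. rx_stream E = y} \<le> (K - 1) * d" .
qed

lemma tx_streams_all:
  assumes "2 \<le> K"
  shows "tx_stream ` equations K (\<lambda>_. d) = {..<K} \<times> {..<d}"
proof (intro equalityI subsetI)
  fix p assume "p \<in> {..<K} \<times> {..<d}"
  then obtain j n where p: "p = (j, n)" "j < K" "n < d" by auto
  define k :: nat where "k = (if j = 0 then 1 else 0)"
  have "(k, j, 0, n) \<in> equations K (\<lambda>_. d)"
    using assms p by (auto simp: k_def equations_def)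
  then show "p \<in> tx_stream ` equations K (\<lambda>_. d)"
    using p by (force simp: tx_stream_def)
qed (auto simp: tx_stream_def equations_def)

lemma rx_streams_all:
  assumes "2 \<le> K"
  shows "rx_stream ` equations K (\<lambda>_. d) = {..<K} \<times> {..<d}"
proof (intro equalityI subsetI)
  fix p assume "p \<in> {..<K} \<times> {..<d}"
  then obtain k m where p: "p = (k, m)" "k < K" "m < d" by auto
  define j :: nat where "j = (if k = 0 then 1 else 0)"
  have "(k, j, m, 0) \<in> equations K (\<lambda>_. d)"
    using assms p by (auto simp: j_def equations_def)
  then show "p \<in> rx_stream ` equations K (\<lambda>_. d)"
    using p by (force simp: rx_stream_def)
qed (auto simp: rx_stream_def equations_def)

lemma proper_if_budget:
  assumes "(K - 1) * d \<le> (M - d) + (N - d)"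
  shows "proper_system K (\<lambda>_. M) (\<lambda>_. N) (\<lambda>_. d)"
  unfolding proper_system_def
proof (intro allI impI)
  fix S assume S: "S \<subseteq> equations K (\<lambda>_. d)"
  have "card S \<le> (M - d) * card (tx_stream ` S) + (N - d) * card (rx_stream ` S)"
    using assms card_le_tx_streams[OF S] card_le_rx_streams[OF S] by (rule split_bound)
  also have "\<dots> = card (\<Union>E\<in>S. eq_vars (\<lambda>_. M) (\<lambda>_. N) (\<lambda>_. d) E)"
    using card_vars_of_equations[OF finite_subset[OF S finite_equations]] by simp
  finally show "card S \<le> card (\<Union>E\<in>S. eq_vars (\<lambda>_. M) (\<lambda>_. N) (\<lambda>_. d) E)" .
qed

(* Necessity: properness applied to the full equation set gives the budget. *)
lemma budget_if_proper:
  assumes "proper_system K (\<lambda>_. M) (\<lambda>_. N) (\<lambda>_. d)" and "2 \<le> K" and "0 < d"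
  shows "(K - 1) * d \<le> (M - d) + (N - d)"
proof -
  let ?E = "equations K (\<lambda>_. d)"
  have "(K * d) * ((K - 1) * d) = card ?E"
    by (simp add: card_equations power2_eq_square)
  also have "\<dots> \<le> card (\<Union>E\<in>?E. eq_vars (\<lambda>_. M) (\<lambda>_. N) (\<lambda>_. d) E)"
    using assms(1) by (simp add: proper_system_def)
  also have "\<dots> = (K * d) * ((M - d) + (N - d))"
    using assms(2) by (simp add: card_vars_of_equations finite_equations tx_streams_all
        rx_streams_all algebra_simps)
  finally show ?thesis using assms(2,3) by simp
qed

lemma budget_condition:
  fixes K M N d :: nat
  assumes "d \<le> M" and "d \<le> N" and "1 \<le> K"
  shows "(K - 1) * d \<le> (M - d) + (N - d) \<longleftrightarrow> int M + int N - (int K + 1) * int d \<ge> 0"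
proof -
  have "int ((K - 1) * d) = int K * int d - int d"
    using assms(3) by (simp add: of_nat_diff algebra_simps)
  moreover have "int ((M - d) + (N - d)) = int M + int N - 2 * int d"
    using assms(1,2) by (simp add: of_nat_diff)
  ultimately have "(K - 1) * d \<le> (M - d) + (N - d)
                   \<longleftrightarrow> int K * int d - int d \<le> int M + int N - 2 * int d"
    by (metis of_nat_le_iff)
  also have "\<dots> \<longleftrightarrow> int M + int N - (int K + 1) * int d \<ge> 0"
    by (simp add: algebra_simps)
  finally show ?thesis .
qed

theorem theorem2:
  fixes K M N d :: nat
  assumes "K \<ge> 2" and "0 < M" and "0 < N" and "0 < d" and "d \<le> min M N"
  shows "num_vars K (\<lambda>_. M) (\<lambda>_. N) (\<lambda>_. d) = K * d * (M + N - 2 * d)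
       \<and> num_eqs K (\<lambda>_. d) = K * (K - 1) * d ^ 2
       \<and> (proper_system K (\<lambda>_. M) (\<lambda>_. N) (\<lambda>_. d)
            \<longleftrightarrow> num_eqs K (\<lambda>_. d) \<le> num_vars K (\<lambda>_. M) (\<lambda>_. N) (\<lambda>_. d))
       \<and> (proper_system K (\<lambda>_. M) (\<lambda>_. N) (\<lambda>_. d)
            \<longleftrightarrow> int M + int N - (int K + 1) * int d \<ge> 0)"
proof -
  have vars: "num_vars K (\<lambda>_. M) (\<lambda>_. N) (\<lambda>_. d) = K * d * (M + N - 2 * d)"
    by (simp add: num_vars_def)
  have eqs: "num_eqs K (\<lambda>_. d) = K * (K - 1) * d ^ 2"
    by (simp add: num_eqs_def card_equations)
  have proper: "proper_system K (\<lambda>_. M) (\<lambda>_. N) (\<lambda>_. d) \<longleftrightarrow> (K - 1) * d \<le> (M - d) + (N - d)"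
    using proper_if_budget budget_if_proper assms(1,4) by blast
  have "M + N - 2 * d = (M - d) + (N - d)" using assms(5) by simp
  then have "num_eqs K (\<lambda>_. d) \<le> num_vars K (\<lambda>_. M) (\<lambda>_. N) (\<lambda>_. d)
             \<longleftrightarrow> (K * d) * ((K - 1) * d) \<le> (K * d) * ((M - d) + (N - d))"
    unfolding vars eqs by (simp add: power2_eq_square algebra_simps)
  also have "\<dots> \<longleftrightarrow> (K - 1) * d \<le> (M - d) + (N - d)" using assms(1,4) by simp
  finally have counts: "num_eqs K (\<lambda>_. d) \<le> num_vars K (\<lambda>_. M) (\<lambda>_. N) (\<lambda>_. d)
                        \<longleftrightarrow> (K - 1) * d \<le> (M - d) + (N - d)" .
  have budget: "(K - 1) * d \<le> (M - d) + (N - d) \<longleftrightarrow> int M + int N - (int K + 1) * int d \<ge> 0"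
    using assms(1,5) by (intro budget_condition) auto
  from vars eqs proper counts budget show ?thesis by blast
qed

end
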